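(* Let $\eta_2=\int_1^\infty\frac{\mathrm{d}t}{\sqrt{t^4-1}}$ and let $\mathrm{cleafh}_2:(-\eta_2,\eta_2)\to\mathbb{R}$ be the hyperbolic leaf function of basis $2$. For every real $l$ with $2l\in(-\eta_2,\eta_2)$, writing $C=\mathrm{cleafh}_2(l)$, $$\mathrm{cleafh}_2(2l)=\frac{C^4+2C^2-1}{-C^4+2C^2+1}.$$
   Context: For a natural number $n$, let $\eta_n=\int_1^\infty\frac{\mathrm{d}t}{\sqrt{t^{2n}-1}}$. The hyperbolic leaf function $\mathrm{cleafh}_n$ is the solution $r(l)$ on $(-\eta_n,\eta_n)$ of $\frac{\mathrm{d}^2r}{\mathrm{d}l^2}=n\,r^{2n-1}$ with $r(0)=1$, $r'(0)=0$; it is even, and for $l\ge0$ it is the inverse of $r\mapsto\int_1^r\frac{\mathrm{d}t}{\sqrt{t^{2n}-1}}$, $r\ge1$. *)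

theory Defs
  imports "HOL-Analysis.Analysis"
begin

definition leaf_integrand :: "nat \<Rightarrow> real \<Rightarrow> real" where
  "leaf_integrand n t = 1 / sqrt (t ^ (2 * n) - 1)"

definition eta :: "nat \<Rightarrow> real" where
  "eta n = integral {1..} (leaf_integrand n)"

definition cleafh :: "nat \<Rightarrow> real \<Rightarrow> real" where
  "cleafh n l = (THE r. 1 \<le> r \<and> integral {1..r} (leaf_integrand n) = \<bar>l\<bar>)"

end

theory Submission
  imports Defs
begin

text \<open>\<open>cleafh 2\<close> inverts \<open>F = leaf_integral 2\<close>, \<open>F r = \<integral>\<^sub>1\<^sup>r dt / sqrt (t\<^sup>4 - 1)\<close>, on \<open>[1, \<infinity>)\<close>.
  The rational map \<open>\<phi> = doubling_map\<close> satisfies \<open>\<phi>' x / sqrt (\<phi> x\<^sup>4 - 1) = 2 / sqrt (x\<^sup>4 - 1)\<close>,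
  hence \<open>F (\<phi> x) = 2 F x\<close> on \<open>[1, c)\<close>, where \<open>c = sqrt (1 + sqrt 2)\<close> is the pole of \<open>\<phi>\<close>.
  Letting \<open>x \<rightarrow> c\<^sup>-\<close> gives \<open>2 F c = \<eta>\<^sub>2\<close>, so every \<open>l\<close> with \<open>\<bar>2l\<bar> < \<eta>\<^sub>2\<close> is \<open>\<plusminus>F C\<close> for some
  \<open>C \<in> [1, c)\<close>, and then \<open>cleafh 2 (2l) = \<phi> C\<close>.\<close>

lemma leaf_integrand_pos: "1 \<le> n \<Longrightarrow> 1 < t \<Longrightarrow> 0 < leaf_integrand n t"
  by (simp add: leaf_integrand_def one_less_power)

lemma leaf_integrand_nonneg: "1 \<le> t \<Longrightarrow> 0 \<le> leaf_integrand n t"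
  by (simp add: leaf_integrand_def one_le_power)

lemma continuous_on_leaf_integrand:
  assumes "1 \<le> n" "1 < a"
  shows "continuous_on {a..b} (leaf_integrand n)"
proof -
  have "1 < t ^ (2 * n)" if "t \<in> {a..b}" for t :: real
    using that assms by (intro one_less_power) auto
  then have "sqrt (t ^ (2 * n) - 1) \<noteq> 0" if "t \<in> {a..b}" for t :: real
    using that by fastforce
  then show ?thesis
    unfolding leaf_integrand_def[abs_def] by (intro continuous_intros) auto
qed

definition leaf_integral :: "nat \<Rightarrow> real \<Rightarrow> real" where
  "leaf_integral n r = integral {1..r} (leaf_integrand n)"

lemma leaf_integral_1 [simp]: "leaf_integral n 1 = 0"
  by (simp add: leaf_integral_def)

locale integrable_leaf =
  fixes n :: nat
  assumes basis_pos: "1 \<le> n"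
    and integrable: "leaf_integrand n integrable_on {1..}"
begin

lemma integrable_on_interval: "1 \<le> a \<Longrightarrow> leaf_integrand n integrable_on {a..b}"
  using integrable_on_subinterval[OF integrable] by auto

lemma continuous_on_leaf_integral_interval: "continuous_on {1..b} (leaf_integral n)"
  unfolding leaf_integral_def
  by (rule indefinite_integral_continuous_1[OF integrable_on_interval]) simp

lemma continuous_on_leaf_integral: "continuous_on {1..} (leaf_integral n)"
proof -
  have "continuous (at y within {1..}) (leaf_integral n)" if "1 \<le> y" for y
  proof -
    have "continuous (at y within {1..y + 1}) (leaf_integral n)"
      using continuous_on_leaf_integral_interval[of "y + 1"] that
      by (simp add: continuous_on_eq_continuous_within)
    moreover have "at y within {1..} = at y within {1..y + 1}"
      by (rule at_within_nhd[of y "{..<y + 1}"]) auto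
    ultimately show ?thesis by simp
  qed
  then show ?thesis by (simp add: continuous_on_eq_continuous_within)
qed

lemma leaf_integral_has_real_derivative:
  assumes "1 < r"
  shows "(leaf_integral n has_real_derivative leaf_integrand n r) (at r)"
proof -
  define a where "a = (1 + r) / 2"
  have a: "1 < a" "a < r" using assms by (auto simp: a_def)
  have "((\<lambda>x. integral {a..x} (leaf_integrand n)) has_real_derivative leaf_integrand n r)
          (at r within {a..r + 1})"
    using integral_has_real_derivative[OF continuous_on_leaf_integrand[OF basis_pos a(1)]] a
    by simp
  then have "((\<lambda>x. integral {a..x} (leaf_integrand n)) has_real_derivative leaf_integrand n r) (at r)"
    using a at_within_interior[of r "{a..r + 1}"] by simp
  then have deriv: "((\<lambda>x. leaf_integral n a + integral {a..x} (leaf_integrand n))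
                       has_real_derivative leaf_integrand n r) (at r)"
    using DERIV_add[OF DERIV_const] by fastforce
  have "leaf_integral n a + integral {a..x} (leaf_integrand n) = leaf_integral n x"
    if "x \<in> {a<..}" for x
    unfolding leaf_integral_def
    by (rule Henstock_Kurzweil_Integration.integral_combine[OF _ _ integrable_on_interval])
       (use that a in auto)
  then show ?thesis
    using a by (intro has_field_derivative_transform_within_open[OF deriv, of "{a<..}"]) auto
qed

lemma leaf_integral_strict_mono:
  assumes "1 \<le> r" "r < s"
  shows "leaf_integral n r < leaf_integral n s"
proof (rule DERIV_pos_imp_increasing_open[OF assms(2)])
  fix x assume "r < x" "x < s"
  with assms have "1 < x" by simp
  then show "\<exists>y. DERIV (leaf_integral n) x :> y \<and> 0 < y"
    using leaf_integral_has_real_derivative leaf_integrand_pos basis_pos by blast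
next
  show "continuous_on {r..s} (leaf_integral n)"
    using assms by (intro continuous_on_subset[OF continuous_on_leaf_integral_interval]) auto
qed

lemma leaf_integral_inj:
  assumes "1 \<le> r" "1 \<le> s" "leaf_integral n r = leaf_integral n s"
  shows "r = s"
  using leaf_integral_strict_mono[of r s] leaf_integral_strict_mono[of s r] assms
  by (cases r s rule: linorder_cases) auto

lemma cleafh_eqI:
  assumes "1 \<le> r" "leaf_integral n r = \<bar>l\<bar>"
  shows "cleafh n l = r"
  unfolding cleafh_def
proof (rule the_equality)
  show "1 \<le> r \<and> integral {1..r} (leaf_integrand n) = \<bar>l\<bar>"
    using assms by (simp add: leaf_integral_def)
  fix s assume "1 \<le> s \<and> integral {1..s} (leaf_integrand n) = \<bar>l\<bar>"
  then show "s = r"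
    using assms leaf_integral_inj[of s r] by (simp add: leaf_integral_def)
qed

lemma leaf_integral_tendsto_eta: "(leaf_integral n \<longlongrightarrow> eta n) at_top"
proof -
  have abs_int: "leaf_integrand n absolutely_integrable_on {1..}"
    by (rule nonnegative_absolutely_integrable_1[OF integrable]) (auto intro: leaf_integrand_nonneg)
  have "((\<lambda>b. set_lebesgue_integral lebesgue {1..b} (leaf_integrand n)) \<longlongrightarrow>
          set_lebesgue_integral lebesgue {1..} (leaf_integrand n)) at_top"
    by (rule tendsto_set_lebesgue_integral_at_top[OF _ abs_int]) auto
  moreover have "set_lebesgue_integral lebesgue {1..} (leaf_integrand n) = eta n"
    using set_lebesgue_integral_eq_integral(2)[OF abs_int] by (simp add: eta_def)
  moreover have "\<forall>\<^sub>F b in at_top. set_lebesgue_integral lebesgue {1..b} (leaf_integrand n)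
                                  = leaf_integral n b"
    using eventually_ge_at_top[of "1::real"]
  proof eventually_elim
    case (elim b)
    then have "leaf_integrand n absolutely_integrable_on {1..b}"
      by (intro absolutely_integrable_on_subinterval[OF abs_int]) auto
    then show ?case
      unfolding leaf_integral_def by (rule set_lebesgue_integral_eq_integral(2))
  qed
  ultimately show ?thesis
    using Lim_transform_eventually by fastforce
qed

end

lemma integrable_leaf_if_eta_nonzero:
  assumes "1 \<le> n" "eta n \<noteq> 0"
  shows "integrable_leaf n"
  using assms not_integrable_integral by unfold_locales (auto simp: eta_def)

definition doubling_denom :: "real \<Rightarrow> real" where
  "doubling_denom x = - (x ^ 4) + 2 * x ^ 2 + 1"

definition doubling_map :: "real \<Rightarrow> real" where
  "doubling_map x = (x ^ 4 + 2 * x ^ 2 - 1) / doubling_denom x"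

definition doubling_pole :: real where
  "doubling_pole = sqrt (1 + sqrt 2)"

lemma doubling_pole_sq: "doubling_pole ^ 2 = 1 + sqrt 2"
  by (simp add: doubling_pole_def add_nonneg_nonneg)

lemma doubling_pole_gt_1: "1 < doubling_pole"
  by (simp add: doubling_pole_def)

lemma doubling_denom_pole: "doubling_denom doubling_pole = 0"
proof -
  have "doubling_pole ^ 4 = (1 + sqrt 2) ^ 2"
    by (metis doubling_pole_sq num_double numeral_times_numeral power_mult)
  then show ?thesis
    unfolding doubling_denom_def doubling_pole_sq by (simp add: power2_eq_square algebra_simps)
qed

lemma doubling_denom_pos:
  assumes "0 \<le> x" "x < doubling_pole"
  shows "0 < doubling_denom x"
proof -
  have "x ^ 2 < 1 + sqrt 2"
    using power_strict_mono[OF assms(2) assms(1), of 2] doubling_pole_sq by simp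
  moreover have "- sqrt 2 < x ^ 2 - 1"
    using real_sqrt_gt_1_iff[of 2] zero_le_power2[of x] by linarith
  ultimately have "\<bar>x ^ 2 - 1\<bar> < sqrt 2" by linarith
  then have "(x ^ 2 - 1) ^ 2 < 2"
    using power_strict_mono[of "\<bar>x ^ 2 - 1\<bar>" "sqrt 2" 2] by simp
  then show ?thesis
    by (simp add: doubling_denom_def power2_eq_square power4_eq_xxxx algebra_simps)
qed

lemma doubling_map_1 [simp]: "doubling_map 1 = 1"
  by (simp add: doubling_map_def doubling_denom_def)

lemma doubling_map_ge_1:
  assumes "1 \<le> x" "x < doubling_pole"
  shows "1 \<le> doubling_map x"
  using doubling_denom_pos[of x] assms one_le_power[of x 4]
  by (simp add: doubling_map_def doubling_denom_def)

lemma doubling_map_gt_1: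
  assumes "1 < x" "x < doubling_pole"
  shows "1 < doubling_map x"
  using doubling_denom_pos[of x] assms one_less_power[of x 4]
  by (simp add: doubling_map_def doubling_denom_def)

lemma doubling_map_has_real_derivative:
  assumes "doubling_denom x \<noteq> 0"
  shows "(doubling_map has_real_derivative 8 * x * (x ^ 4 + 1) / doubling_denom x ^ 2) (at x)"
proof -
  have "(doubling_map has_real_derivative
          ((4 * x ^ 3 + 4 * x) * doubling_denom x - (x ^ 4 + 2 * x ^ 2 - 1) * (4 * x - 4 * x ^ 3))
            / (doubling_denom x * doubling_denom x)) (at x)"
    using assms unfolding doubling_map_def[abs_def] doubling_denom_def[abs_def]
    by (auto intro!: derivative_eq_intros simp: power2_eq_square power3_eq_cube)
  moreover have "((4 * x ^ 3 + 4 * x) * doubling_denom x - (x ^ 4 + 2 * x ^ 2 - 1) * (4 * x - 4 * x ^ 3))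
                   / (doubling_denom x * doubling_denom x) = 8 * x * (x ^ 4 + 1) / doubling_denom x ^ 2"
    by (simp add: doubling_denom_def power2_eq_square power3_eq_cube power4_eq_xxxx algebra_simps)
  ultimately show ?thesis by simp
qed

text \<open>With \<open>N - D = 2 (x\<^sup>4 - 1)\<close>, \<open>N + D = 4x\<^sup>2\<close> and \<open>N\<^sup>2 + D\<^sup>2 = 2 (x\<^sup>4 + 1)\<^sup>2\<close> for the numerator \<open>N\<close>
  and denominator \<open>D\<close> of the doubling map, \<open>N\<^sup>4 - D\<^sup>4\<close> factors into a square times \<open>x\<^sup>4 - 1\<close>.\<close>

lemma doubling_map_pow4_minus_1:
  assumes "doubling_denom x \<noteq> 0"
  shows "doubling_map x ^ 4 - 1 = (4 * x * (x ^ 4 + 1) / doubling_denom x ^ 2) ^ 2 * (x ^ 4 - 1)"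
proof -
  define N where "N = x ^ 4 + 2 * x ^ 2 - 1"
  define D where "D = doubling_denom x"
  have "(N / D) ^ 4 - 1 = (N - D) * (N + D) * (N ^ 2 + D ^ 2) / D ^ 4"
    using assms by (simp add: D_def field_simps power2_eq_square power4_eq_xxxx)
  also have "\<dots> = 16 * x ^ 2 * (x ^ 4 + 1) ^ 2 * (x ^ 4 - 1) / D ^ 4"
    by (simp add: N_def D_def doubling_denom_def power2_eq_square power4_eq_xxxx algebra_simps)
  also have "\<dots> = (4 * x * (x ^ 4 + 1) / D ^ 2) ^ 2 * (x ^ 4 - 1)"
    using assms by (simp add: D_def field_simps power2_eq_square power4_eq_xxxx)
  finally show ?thesis by (simp add: doubling_map_def N_def D_def)
qed

lemma leaf_integrand_doubling_map:
  assumes "1 < x" "x < doubling_pole"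
  shows "leaf_integrand 2 (doubling_map x) * (8 * x * (x ^ 4 + 1) / doubling_denom x ^ 2)
           = 2 * leaf_integrand 2 x"
proof -
  define K where "K = 4 * x * (x ^ 4 + 1) / doubling_denom x ^ 2"
  have D: "0 < doubling_denom x" using doubling_denom_pos assms by simp
  then have K: "0 < K" using assms by (simp add: K_def add_pos_pos)
  have "sqrt (doubling_map x ^ 4 - 1) = sqrt (K ^ 2) * sqrt (x ^ 4 - 1)"
    using doubling_map_pow4_minus_1[of x] D by (simp add: K_def real_sqrt_mult)
  also have "sqrt (K ^ 2) = K" using K by simp
  finally have "sqrt (doubling_map x ^ 4 - 1) = K * sqrt (x ^ 4 - 1)" .
  moreover have "8 * x * (x ^ 4 + 1) / doubling_denom x ^ 2 = 2 * K" by (simp add: K_def)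
  ultimately show ?thesis
    using K by (simp add: leaf_integrand_def)
qed

lemma filterlim_doubling_map_at_left_pole: "filterlim doubling_map at_top (at_left doubling_pole)"
proof -
  have "((\<lambda>x. x ^ 4 + 2 * x ^ 2 - 1) \<longlongrightarrow> doubling_pole ^ 4 + 2 * doubling_pole ^ 2 - 1)
          (at_left doubling_pole)"
    by (intro tendsto_intros)
  moreover have "0 < doubling_pole ^ 4 + 2 * doubling_pole ^ 2 - 1"
    using one_le_power[of doubling_pole] doubling_pole_gt_1 by (smt (verit))
  moreover have "(doubling_denom \<longlongrightarrow> 0) (at_left doubling_pole)"
    unfolding doubling_denom_pole[symmetric] doubling_denom_def[abs_def] by (intro tendsto_intros)
  moreover have "\<forall>\<^sub>F x in at_left doubling_pole. 0 < doubling_denom x"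
    using doubling_pole_gt_1
    by (intro eventually_at_leftI[of 0]) (auto intro: doubling_denom_pos)
  ultimately show ?thesis
    unfolding doubling_map_def[abs_def] by (rule LIM_at_top_divide)
qed

lemma leaf_integral_doubling:
  assumes "integrable_leaf 2" "1 \<le> x" "x < doubling_pole"
  shows "leaf_integral 2 (doubling_map x) = 2 * leaf_integral 2 x"
proof -
  interpret integrable_leaf 2 by (fact assms(1))
  define g where "g y = leaf_integral 2 (doubling_map y) - 2 * leaf_integral 2 y" for y
  have "g x = g 1"
  proof (cases "x = 1")
    case False
    with assms have x: "1 < x" by simp
    show ?thesis
    proof (rule DERIV_isconst2[OF x])
      have "doubling_denom y \<noteq> 0" if "y \<in> {1..x}" for y
        using that assms doubling_denom_pos[of y] by simp
      then have "continuous_on {1..x} doubling_map"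
        unfolding doubling_map_def[abs_def] doubling_denom_def[abs_def]
        by (intro continuous_intros) auto
      moreover have "doubling_map ` {1..x} \<subseteq> {1..}" using doubling_map_ge_1 assms by auto
      ultimately have "continuous_on {1..x} (\<lambda>y. leaf_integral 2 (doubling_map y))"
        by (rule continuous_on_compose2[OF continuous_on_leaf_integral])
      then show "continuous_on {1..x} g"
        unfolding g_def by (intro continuous_intros continuous_on_leaf_integral_interval)
    next
      fix y assume y: "1 < y" "y < x"
      with assms have y_pole: "y < doubling_pole" by simp
      have "DERIV (\<lambda>y. leaf_integral 2 (doubling_map y)) y :> 2 * leaf_integrand 2 y"
        using DERIV_chain2[OF leaf_integral_has_real_derivative[OF doubling_map_gt_1[OF y(1) y_pole]]
                              doubling_map_has_real_derivative]
              leaf_integrand_doubling_map[OF y(1) y_pole] doubling_denom_pos[of y] y y_pole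
        by simp
      from DERIV_diff[OF this DERIV_cmult[OF leaf_integral_has_real_derivative[OF y(1)], of 2]]
      show "DERIV g y :> 0"
        unfolding g_def[abs_def] by simp
    qed (use assms in auto)
  qed simp
  then show ?thesis by (simp add: g_def)
qed

lemma leaf_integral_doubling_pole:
  assumes "integrable_leaf 2"
  shows "2 * leaf_integral 2 doubling_pole = eta 2"
proof -
  interpret integrable_leaf 2 by (fact assms)
  have "((\<lambda>x. leaf_integral 2 (doubling_map x)) \<longlongrightarrow> eta 2) (at_left doubling_pole)"
    using filterlim_compose[OF leaf_integral_tendsto_eta filterlim_doubling_map_at_left_pole] .
  moreover have "\<forall>\<^sub>F x in at_left doubling_pole. leaf_integral 2 (doubling_map x) = 2 * leaf_integral 2 x"
    using leaf_integral_doubling[OF assms] doubling_pole_gt_1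
    by (intro eventually_at_leftI[of 1]) auto
  ultimately have "((\<lambda>x. 2 * leaf_integral 2 x) \<longlongrightarrow> eta 2) (at_left doubling_pole)"
    by (rule Lim_transform_eventually)
  moreover have "isCont (leaf_integral 2) doubling_pole"
    using leaf_integral_has_real_derivative[OF doubling_pole_gt_1] by (rule DERIV_isCont)
  then have "((\<lambda>x. 2 * leaf_integral 2 x) \<longlongrightarrow> 2 * leaf_integral 2 doubling_pole) (at_left doubling_pole)"
    by (intro tendsto_intros) (simp add: isCont_def filterlim_at_split)
  ultimately show ?thesis
    by (intro tendsto_unique[of "at_left doubling_pole"]) simp_all
qed

theorem mainTheorem9:
  fixes l :: real
  assumes "- eta 2 < 2 * l" and "2 * l < eta 2"
  shows "cleafh 2 (2 * l) =
    ((cleafh 2 l) ^ 4 + 2 * (cleafh 2 l) ^ 2 - 1) / (- ((cleafh 2 l) ^ 4) + 2 * (cleafh 2 l) ^ 2 + 1)"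
proof -
  have leaf: "integrable_leaf 2"
    using assms by (intro integrable_leaf_if_eta_nonzero) auto
  interpret integrable_leaf 2 by (fact leaf)
  have "\<bar>l\<bar> < leaf_integral 2 doubling_pole"
    using assms leaf_integral_doubling_pole[OF leaf] by linarith
  then obtain C where C: "1 \<le> C" "C \<le> doubling_pole" "leaf_integral 2 C = \<bar>l\<bar>"
    using IVT'[of "leaf_integral 2" 1 "\<bar>l\<bar>" doubling_pole] doubling_pole_gt_1
          continuous_on_leaf_integral_interval by auto
  with \<open>\<bar>l\<bar> < leaf_integral 2 doubling_pole\<close> have C_pole: "C < doubling_pole"
    by (cases "C = doubling_pole") auto
  have "cleafh 2 l = C" using C by (intro cleafh_eqI) auto
  moreover have "cleafh 2 (2 * l) = doubling_map C"
    using C leaf_integral_doubling[OF leaf C(1) C_pole] doubling_map_ge_1[OF C(1) C_pole]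
    by (intro cleafh_eqI) auto
  ultimately show ?thesis by (simp add: doubling_map_def doubling_denom_def)
qed

end
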